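(* Let $0<\beta<1$ and $0<\gamma<n$. If $b$ is a locally integrable function on $\mathbb{R}^n$ such that, for some $s(\cdot)\in\mathscr{B}(\mathbb{R}^n)$ and some constant $C$, $$\sup_{Q}\frac{1}{|Q|^{\beta/n}}\frac{\big\|\big(b-|Q|^{-\gamma/n}M_{\gamma,Q}(b)\big)\chi_Q\big\|_{L^{s(\cdot)}(\mathbb{R}^n)}}{\|\chi_Q\|_{L^{s(\cdot)}(\mathbb{R}^n)}}\le C,$$ (supremum over all cubes $Q\subset\mathbb{R}^n$), then $b\in\dot{\Lambda}_\beta(\mathbb{R}^n)$.
   Context: Cubes have sides parallel to the coordinate axes; $|Q|$ is Lebesgue measure and $\chi_Q$ the characteristic function. For a fixed cube $Q_0$ and $\gamma\ge0$, $M_{\gamma,Q_0}(f)(x)=\sup\{|Q|^{\gamma/n-1}\int_Q|f(y)|\,dy : x\in Q\subseteq Q_0\}$ for $x\in Q_0$. For $0<\beta<1$, $\dot{\Lambda}_\beta(\mathbb{R}^n)$ is the set of functions $b$ with $|b(x)-b(y)|\le C|x-y|^\beta$ for all $x,y$. For measurable $p(\cdot):\mathbb{R}^n\to[1,\infty)$, $L^{p(\cdot)}(\mathbb{R}^n)$ is the space of measurable $f$ with $\int(|f(x)|/\lambda)^{p(x)}dx<\infty$ for some $\lambda>0$, normed by $\|f\|_{L^{p(\cdot)}}=\inf\{\lambda>0:\int(|f(x)|/\lambda)^{p(x)}dx\le1\}$. $\mathscr{B}(\mathbb{R}^n)$ is the set of measurable $p(\cdot):\mathbb{R}^n\to[1,\infty)$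 with $1<\operatorname{ess\,inf}p$, $\operatorname{ess\,sup}p<\infty$, such that the Hardy–Littlewood maximal function $M(f)(x)=\sup_{Q\ni x}|Q|^{-1}\int_Q|f|$ is bounded on $L^{p(\cdot)}(\mathbb{R}^n)$. *)

theory Defs
  imports "HOL-Analysis.Analysis"
begin

text \<open>Cubes with sides parallel to the coordinate axes (closed; boundaries are null sets).\<close>
definition is_cube :: "'a::euclidean_space set \<Rightarrow> bool" where
  "is_cube Q \<longleftrightarrow> (\<exists>a h. h > 0 \<and> Q = cbox a (a + h *\<^sub>R One))"

definition locally_integrable :: "('a::euclidean_space \<Rightarrow> real) \<Rightarrow> bool" where
  "locally_integrable f \<longleftrightarrow> (\<forall>K. compact K \<longrightarrow> set_integrable lebesgue K f)"

definition epowr :: "ennreal \<Rightarrow> real \<Rightarrow> ennreal" where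
  "epowr x p = (if x = \<infinity> then \<infinity> else ennreal (enn2real x powr p))"

text \<open>Modular and Luxemburg norm of L^{p(.)}, for [0,inf]-valued functions (|f|).
  The norm is infinity if no admissible lambda exists.\<close>
definition vmod :: "('a::euclidean_space \<Rightarrow> real) \<Rightarrow> ('a \<Rightarrow> ennreal) \<Rightarrow> real \<Rightarrow> ennreal" where
  "vmod p F lam = (\<integral>\<^sup>+ x. epowr (F x / ennreal lam) (p x) \<partial>lebesgue)"

definition vnorm :: "('a::euclidean_space \<Rightarrow> real) \<Rightarrow> ('a \<Rightarrow> ennreal) \<Rightarrow> ennreal" where
  "vnorm p F = Inf {ennreal lam | lam. lam > 0 \<and> vmod p F lam \<le> 1}"

definition in_Lp :: "('a::euclidean_space \<Rightarrow> real) \<Rightarrow> ('a \<Rightarrow> real) \<Rightarrow> bool" where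
  "in_Lp p f \<longleftrightarrow> f \<in> borel_measurable lebesgue \<and>
     (\<exists>lam>0. vmod p (\<lambda>x. ennreal \<bar>f x\<bar>) lam < \<infinity>)"

definition HL_max :: "('a::euclidean_space \<Rightarrow> real) \<Rightarrow> 'a \<Rightarrow> ennreal" where
  "HL_max f x = (SUP Q\<in>{Q. is_cube Q \<and> x \<in> Q}.
      (\<integral>\<^sup>+ y\<in>Q. ennreal \<bar>f y\<bar> \<partial>lebesgue) / emeasure lebesgue Q)"

definition class_B :: "('a::euclidean_space \<Rightarrow> real) set" where
  "class_B = {p. p \<in> borel_measurable lebesgue \<and> (\<forall>x. 1 \<le> p x) \<and>
      (\<exists>pm pM. 1 < pm \<and> pM < \<infinity> \<and> (AE x in lebesgue. pm \<le> p x \<and> p x \<le> pM)) \<and>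
      (\<exists>C. \<forall>f. in_Lp p f \<longrightarrow>
          vnorm p (HL_max f) \<le> ennreal C * vnorm p (\<lambda>x. ennreal \<bar>f x\<bar>))}"

text \<open>Fractional maximal function relative to a cube Q0 (extended-real valued;
  meaningful for x in Q0).\<close>
definition frac_max :: "real \<Rightarrow> 'a::euclidean_space set \<Rightarrow> ('a \<Rightarrow> real) \<Rightarrow> 'a \<Rightarrow> ereal" where
  "frac_max \<gamma> Q0 f x = (SUP Q\<in>{Q. is_cube Q \<and> x \<in> Q \<and> Q \<subseteq> Q0}.
      ereal (measure lebesgue Q powr (\<gamma> / real DIM('a) - 1) *
             (\<integral>y\<in>Q. \<bar>f y\<bar> \<partial>lebesgue)))"

definition osc_fun :: "real \<Rightarrow> ('a::euclidean_space \<Rightarrow> real) \<Rightarrow> 'a set \<Rightarrow> 'a \<Rightarrow> ennreal" where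
  "osc_fun \<gamma> b Q x = e2ennreal \<bar>ereal (b x) -
      ereal (measure lebesgue Q powr (- \<gamma> / real DIM('a))) * frac_max \<gamma> Q b x\<bar> * indicator Q x"

definition lip_space :: "real \<Rightarrow> ('a::euclidean_space \<Rightarrow> real) set" where
  "lip_space \<beta> = {b. \<exists>C. \<forall>x y. \<bar>b x - b y\<bar> \<le> C * norm (x - y) powr \<beta>}"

end

theory Submission
  imports Defs
begin

text \<open>
  Write b_Q for the mean of b over a cube Q of side h. On Q the normalised fractional maximal
  function |Q|^(-\<gamma>/n) M_(\<gamma>,Q) b is at least |Q|^(-1) \<integral>_Q |b| \<ge> b_Q, so the oscillation
  function of the hypothesis dominates f = (b_Q - b)^+ \<chi>_Q. The mean f_Q of f times \<chi>_Q is
  dominated by M f, so the boundedness of M on L^s(.) together with the hypothesis gives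
  f_Q \<le> C' h^\<beta>. As \<integral>_Q |b - b_Q| = 2 \<integral>_Q f, b satisfies Campanato's condition
  |Q|^(-1) \<integral>_Q |b - b_Q| \<le> K h^\<beta>.

  Under Campanato's condition the means over nested cubes of comparable size differ by O(h^\<beta>),
  so the means over the dyadic cubes with lower corner x converge, at rate h^\<beta>, to a limit
  b'(x); b' is \<beta>-Hoelder because two points x, y lie in a common cube of side |x - y|.
  Finally \<integral>_Q |b - b'| = O(h^(n+\<beta>)) for every cube, and subdividing Q into N^n subcubes of
  side h/N improves this bound by the factor N^(-\<beta>), so b = b' almost everywhere.
\<close>

section \<open>Cubes\<close>

definition cube :: "'a::euclidean_space \<Rightarrow> real \<Rightarrow> 'a set" where
  "cube a h = cbox a (a + h *\<^sub>R One)"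

lemma mem_cube: "x \<in> cube a h \<longleftrightarrow> (\<forall>i\<in>Basis. a \<bullet> i \<le> x \<bullet> i \<and> x \<bullet> i \<le> a \<bullet> i + h)"
  by (auto simp: cube_def mem_box inner_simps)

lemma is_cube_cube: "0 < h \<Longrightarrow> is_cube (cube a h)"
  unfolding is_cube_def cube_def by blast

lemma is_cube_iff: "is_cube Q \<longleftrightarrow> (\<exists>a h. 0 < h \<and> Q = cube a h)"
  unfolding is_cube_def cube_def by blast

lemma sets_cube [measurable]: "cube a h \<in> sets lebesgue"
  by (simp add: cube_def)

lemma compact_cube: "compact (cube a h)"
  by (simp add: cube_def)

lemma measure_cube: "0 \<le> h \<Longrightarrow> measure lebesgue (cube (a::'a::euclidean_space) h) = h ^ DIM('a)"
  by (simp add: cube_def inner_simps)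

lemma measure_cube_powr:
  assumes "0 < h"
  shows "measure lebesgue (cube (a::'a::euclidean_space) h) powr (\<beta> / real DIM('a)) = h powr \<beta>"
proof -
  have "measure lebesgue (cube a h) = h powr real DIM('a)"
    using assms by (simp add: measure_cube powr_realpow)
  then show ?thesis
    by (simp add: powr_powr)
qed

lemma emeasure_cube_finite: "emeasure lebesgue (cube a h) < \<infinity>"
  using emeasure_lborel_cbox_finite[of a "a + h *\<^sub>R One"] by (simp add: cube_def)

lemma cube_subset_cube:
  "(\<And>i. i \<in> Basis \<Longrightarrow> a \<bullet> i \<le> c \<bullet> i \<and> c \<bullet> i + h \<le> a \<bullet> i + k) \<Longrightarrow> cube c h \<subseteq> cube a k"
  by (fastforce simp: mem_cube)

lemma set_integrable_cube: "locally_integrable f \<Longrightarrow> set_integrable lebesgue (cube a h) f"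
  using compact_cube unfolding locally_integrable_def by blast

lemma UN_centered_cubes:
  "(\<Union>m::nat. cube (- real (Suc m) *\<^sub>R One) (2 * real (Suc m))) = (UNIV :: 'a::euclidean_space set)"
proof -
  have "x \<in> (\<Union>m::nat. cube (- real (Suc m) *\<^sub>R One) (2 * real (Suc m)))" for x :: 'a
  proof -
    obtain m :: nat where m: "norm x \<le> real m"
      using real_arch_simple by blast
    have "- real (Suc m) \<le> x \<bullet> i \<and> x \<bullet> i \<le> real (Suc m)" if "i \<in> Basis" for i
      using Basis_le_norm[OF that, of x] m by linarith
    then have "x \<in> cube (- real (Suc m) *\<^sub>R One) (2 * real (Suc m))"
      by (simp add: mem_cube inner_simps)
    then show ?thesis
      by blast
  qed
  then show ?thesis
    by auto
qed

lemma locally_integrable_imp_measurable: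
  assumes "locally_integrable f"
  shows "f \<in> borel_measurable lebesgue"
proof (rule measurable_piecewise_restrict2)
  let ?C = "\<lambda>m::nat. cube (- real (Suc m) *\<^sub>R One) (2 * real (Suc m))"
  show "space lebesgue = (\<Union>m. ?C m)"
    unfolding UN_centered_cubes by simp
  show "\<exists>g\<in>borel_measurable lebesgue. \<forall>x\<in>?C m. f x = g x" for m
  proof
    show "(\<lambda>x. indicator (?C m) x *\<^sub>R f x) \<in> borel_measurable lebesgue"
      using set_integrable_cube[OF assms] unfolding set_integrable_def by (rule borel_measurable_integrable)
  qed simp
qed simp

lemma sets_if_is_cube: "is_cube Q \<Longrightarrow> Q \<in> sets lebesgue"
  by (auto simp: is_cube_iff)

lemma set_integrable_if_is_cube: "is_cube Q \<Longrightarrow> locally_integrable f \<Longrightarrow> set_integrable lebesgue Q f"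
  by (auto simp: is_cube_iff set_integrable_cube)

lemma measure_pos_if_is_cube: "is_cube Q \<Longrightarrow> 0 < measure lebesgue Q"
  by (auto simp: is_cube_iff measure_cube)

lemma emeasure_eq_measure_if_is_cube:
  assumes "is_cube Q"
  shows "emeasure lebesgue Q = ennreal (measure lebesgue Q)"
proof -
  obtain a h where "Q = cube a h"
    using assms by (auto simp: is_cube_iff)
  then show ?thesis
    using emeasure_cube_finite[of a h] by (intro emeasure_eq_ennreal_measure) simp
qed

lemma ex_grid_index:
  fixes u :: real and N :: nat
  assumes "1 \<le> N" "0 \<le> u" "u \<le> N"
  obtains k where "k < N" "real k \<le> u" "u \<le> real k + 1"
proof (cases "u < N - 1")
  case True
  show thesis
  proof
    show "nat \<lfloor>u\<rfloor> < N"
      using True assms(1) by linarith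
    show "real (nat \<lfloor>u\<rfloor>) \<le> u" "u \<le> real (nat \<lfloor>u\<rfloor>) + 1"
      using assms(2) by linarith+
  qed
next
  case False
  show thesis
  proof
    show "N - 1 < N" "real (N - 1) \<le> u" "u \<le> real (N - 1) + 1"
      using False assms by (auto simp: of_nat_diff)
  qed
qed

lemma cube_grid_cover:
  fixes a x :: "'a::euclidean_space" and N :: nat
  assumes N: "1 \<le> N" and h: "0 < h" and x: "x \<in> cube a h"
  obtains k where "k \<in> Basis \<rightarrow>\<^sub>E {..<N}"
    and "x \<in> cube (a + (h / N) *\<^sub>R (\<Sum>i\<in>Basis. real (k i) *\<^sub>R i)) (h / N)"
proof -
  define t where "t = h / N"
  have t: "0 < t" "h / t = N"
    using N h by (auto simp: t_def)
  have "\<exists>k<N. real k \<le> (x \<bullet> i - a \<bullet> i) / t \<and> (x \<bullet> i - a \<bullet> i) / t \<le> real k + 1"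
    if i: "i \<in> Basis" for i
  proof -
    have "0 \<le> x \<bullet> i - a \<bullet> i" "x \<bullet> i - a \<bullet> i \<le> h"
      using x i by (auto simp: mem_cube)
    then have "0 \<le> (x \<bullet> i - a \<bullet> i) / t" "(x \<bullet> i - a \<bullet> i) / t \<le> N"
      using t by (auto simp flip: t(2) intro: divide_right_mono)
    then show ?thesis
      using ex_grid_index[OF N] by metis
  qed
  then obtain k where k: "\<And>i. i \<in> Basis \<Longrightarrow> k i < N \<and> real (k i) \<le> (x \<bullet> i - a \<bullet> i) / t
      \<and> (x \<bullet> i - a \<bullet> i) / t \<le> real (k i) + 1"
    by metis
  show thesis
  proof
    show "restrict k Basis \<in> Basis \<rightarrow>\<^sub>E {..<N}"
      using k by auto
    have "a \<bullet> i + t * real (k i) \<le> x \<bullet> i \<and> x \<bullet> i \<le> a \<bullet> i + t * real (k i) + t"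
      if "i \<in> Basis" for i
      using k[OF that] t(1) by (simp add: field_simps)
    then show "x \<in> cube (a + (h / N) *\<^sub>R (\<Sum>i\<in>Basis. real (restrict k Basis i) *\<^sub>R i)) (h / N)"
      by (simp add: mem_cube inner_simps flip: t_def)
  qed
qed

section \<open>Averages and mean oscillation\<close>

definition set_average :: "'a measure \<Rightarrow> 'a set \<Rightarrow> ('a \<Rightarrow> real) \<Rightarrow> real" where
  "set_average M A f = (LINT x:A|M. f x) / measure M A"

lemma set_integrable_const:
  fixes c :: "'b::{banach, second_countable_topology}"
  assumes "A \<in> sets M" "emeasure M A < \<infinity>"
  shows "set_integrable M A (\<lambda>_. c)"
  using assms unfolding set_integrable_def
  by (intro integrable_scaleR_left) (simp add: integrable_indicator_iff)

lemma set_integrable_max_0: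
  fixes f :: "'a \<Rightarrow> real"
  assumes "set_integrable M A f"
  shows "set_integrable M A (\<lambda>x. max 0 (f x))"
proof -
  have "integrable M (\<lambda>x. max 0 (indicator A x *\<^sub>R f x))"
    using assms unfolding set_integrable_def by (intro integrable_max) auto
  moreover have "(\<lambda>x. max 0 (indicator A x *\<^sub>R f x)) = (\<lambda>x. indicator A x *\<^sub>R max 0 (f x))"
    by (auto simp: fun_eq_iff indicator_def)
  ultimately show ?thesis
    unfolding set_integrable_def by simp
qed

lemma set_integral_mono_set:
  fixes f :: "'a \<Rightarrow> real"
  assumes "set_integrable M B f" "A \<in> sets M" "A \<subseteq> B" "\<And>x. x \<in> B \<Longrightarrow> 0 \<le> f x"
  shows "(LINT x:A|M. f x) \<le> (LINT x:B|M. f x)"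
proof -
  have "set_integrable M A f"
    using set_integrable_subset assms(1-3) by blast
  then show ?thesis
    using assms unfolding set_integrable_def set_lebesgue_integral_def
    by (intro integral_mono) (auto simp: indicator_def)
qed

lemma set_nn_integral_eq_set_integral:
  fixes f :: "'a \<Rightarrow> real"
  assumes "set_integrable M A f" "\<And>x. x \<in> A \<Longrightarrow> 0 \<le> f x"
  shows "(\<integral>\<^sup>+x\<in>A. ennreal (f x) \<partial>M) = ennreal (LINT x:A|M. f x)"
proof -
  have "(\<integral>\<^sup>+x\<in>A. ennreal (f x) \<partial>M) = (\<integral>\<^sup>+x. ennreal (indicator A x *\<^sub>R f x) \<partial>M)"
    by (intro nn_integral_cong) (auto simp: indicator_def)
  also have "\<dots> = ennreal (LINT x:A|M. f x)"
    using assms unfolding set_integrable_def set_lebesgue_integral_def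
    by (intro nn_integral_eq_integral) (auto simp: indicator_def)
  finally show ?thesis .
qed

context
  fixes M :: "'a measure" and A :: "'a set" and f :: "'a \<Rightarrow> real"
  assumes A: "A \<in> sets M" "emeasure M A < \<infinity>" and f: "set_integrable M A f"
begin

lemma set_integrable_diff_const: "set_integrable M A (\<lambda>x. f x - c)"
  by (rule set_integral_diff(1)[OF f set_integrable_const[OF A]])

lemma set_integral_diff_const: "(LINT x:A|M. f x - c) = (LINT x:A|M. f x) - c * measure M A"
  using A by (simp add: set_integral_diff(2)[OF f set_integrable_const[OF A]] set_integral_const
      less_top[symmetric])

lemma set_integral_diff_set_average:
  assumes "0 < measure M A"
  shows "(LINT x:A|M. f x - set_average M A f) = 0"
  using assms by (simp add: set_integral_diff_const set_average_def)

lemma set_integral_abs_diff_set_average: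
  assumes "0 < measure M A"
  shows "(LINT x:A|M. \<bar>f x - set_average M A f\<bar>) = 2 * (LINT x:A|M. max 0 (set_average M A f - f x))"
proof -
  define m where "m = set_average M A f"
  have neg_part: "set_integrable M A (\<lambda>x. max 0 (m - f x))"
    using set_integrable_max_0[OF set_integral_diff(1)[OF set_integrable_const[OF A] f]] .
  have "(LINT x:A|M. \<bar>f x - m\<bar>) = (LINT x:A|M. (f x - m) + 2 * max 0 (m - f x))"
    by (intro set_lebesgue_integral_cong) (auto simp: A abs_if max_def)
  also have "\<dots> = (LINT x:A|M. f x - m) + 2 * (LINT x:A|M. max 0 (m - f x))"
    using set_integral_add(2)[OF set_integrable_diff_const set_integrable_mult_right[OF neg_part]]
    by simp
  finally show ?thesis
    using set_integral_diff_set_average[OF assms] by (simp add: m_def)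
qed

end

lemma abs_set_average_diff_le:
  assumes B: "B \<in> sets M" "emeasure M B < \<infinity>" and f: "set_integrable M B f"
    and A: "A \<in> sets M" "A \<subseteq> B" "0 < measure M A"
  shows "\<bar>set_average M A f - set_average M B f\<bar> \<le> (LINT x:B|M. \<bar>f x - set_average M B f\<bar>) / measure M A"
proof -
  define m where "m = set_average M B f"
  have A_fin: "emeasure M A < \<infinity>"
    using A B by (metis emeasure_mono le_less_trans)
  have fA: "set_integrable M A f"
    using set_integrable_subset f A by blast
  have "set_average M A f - m = (LINT x:A|M. f x - m) / measure M A"
    using A(3) by (simp add: set_integral_diff_const[OF A(1) A_fin fA] set_average_def field_simps)
  moreover have "\<bar>LINT x:A|M. f x - m\<bar> \<le> (LINT x:A|M. \<bar>f x - m\<bar>)"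
    using set_integral_norm_bound[OF set_integrable_diff_const[OF A(1) A_fin fA]] by simp
  moreover have "\<dots> \<le> (LINT x:B|M. \<bar>f x - m\<bar>)"
    by (rule set_integral_mono_set[OF set_integrable_abs[OF set_integrable_diff_const[OF B f]] A(1,2)]) simp
  ultimately show ?thesis
    using A(3) by (simp add: m_def abs_divide divide_right_mono)
qed

section \<open>Campanato's characterisation of Hoelder continuity\<close>

lemma holder_imp_continuous_on:
  fixes f :: "'a::metric_space \<Rightarrow> 'b::metric_space"
  assumes "0 < \<beta>" and holder: "\<And>x y. dist (f x) (f y) \<le> L * dist x y powr \<beta>"
  shows "continuous_on S f"
  unfolding continuous_on_def
proof
  fix x
  have "((\<lambda>y. dist y x) \<longlongrightarrow> 0) (at x within S)"
    using tendsto_dist[OF tendsto_ident_at[of x S] tendsto_const[of x]] by simp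
  then have bound_tendsto: "((\<lambda>y. L * dist y x powr \<beta>) \<longlongrightarrow> 0) (at x within S)"
    using assms(1) by (intro tendsto_mult_right_zero tendsto_zero_powrI) auto
  have le_bound: "\<forall>\<^sub>F y in at x within S. dist (f y) (f x) \<le> L * dist y x powr \<beta>"
    using holder by (intro always_eventually) blast
  have "((\<lambda>y. dist (f y) (f x)) \<longlongrightarrow> 0) (at x within S)"
    by (rule tendsto_sandwich[OF _ le_bound tendsto_const bound_tendsto]) simp
  then show "(f \<longlongrightarrow> f x) (at x within S)"
    by (rule tendsto_dist_iff[THEN iffD2])
qed

lemma Cauchy_if_dist_le_null:
  fixes X :: "nat \<Rightarrow> 'a::metric_space"
  assumes "\<delta> \<longlonglongrightarrow> 0" and bound: "\<And>m n. m \<le> n \<Longrightarrow> dist (X m) (X n) \<le> \<delta> m"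
  shows "Cauchy X"
proof (rule metric_CauchyI)
  fix e :: real
  assume "0 < e"
  then obtain M where M: "\<delta> M < e / 2"
    using order_tendstoD(2)[OF assms(1), of "e / 2"] by (auto simp: eventually_sequentially)
  have "dist (X m) (X n) < e" if "M \<le> m" "M \<le> n" for m n
    using dist_triangle3[of "X m" "X n" "X M"] bound[OF that(1)] bound[OF that(2)] M by simp
  then show "\<exists>M. \<forall>m\<ge>M. \<forall>n\<ge>M. dist (X m) (X n) < e"
    by blast
qed

lemma dyadic_bracket:
  fixes s t :: real
  assumes "0 < t" "t \<le> s"
  obtains j :: nat where "s / 2 ^ Suc j < t" "t \<le> s / 2 ^ j"
proof -
  obtain k :: nat where "s / t < 2 ^ k"
    using real_arch_pow[of 2 "s / t"] by auto
  then have "\<exists>k::nat. s / 2 ^ k < t"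
    using assms by (auto simp: field_simps)
  then obtain j :: nat where "\<not> s / 2 ^ j < t" "s / 2 ^ Suc j < t"
    using exists_least_lemma[of "\<lambda>k. s / 2 ^ k < t"] assms by auto
  then show thesis
    using that by simp
qed

lemma power_powr: "0 < x \<Longrightarrow> (x ^ n) powr a = (x powr a) ^ n" for x :: real
  by (induction n) (auto simp: powr_mult)

lemma divide_power_powr: "(s / 2 ^ j) powr a = s powr a * ((1 / 2) powr a) ^ j" for s :: real
  by (simp add: powr_divide power_powr power_divide)

lemma nn_integral_cube_le_sum_subcubes:
  fixes g :: "'a::euclidean_space \<Rightarrow> ennreal"
  assumes g [measurable]: "g \<in> borel_measurable lebesgue" and N: "1 \<le> N" and h: "0 < h"
  shows "(\<integral>\<^sup>+x\<in>cube a h. g x \<partial>lebesgue) \<le> (\<Sum>k\<in>Basis \<rightarrow>\<^sub>E {..<N}.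
    \<integral>\<^sup>+x\<in>cube (a + (h / N) *\<^sub>R (\<Sum>i\<in>Basis. real (k i) *\<^sub>R i)) (h / N). g x \<partial>lebesgue)"
proof -
  define I where "I = (Basis::'a set) \<rightarrow>\<^sub>E {..<N}"
  define Q where "Q k = cube (a + (h / N) *\<^sub>R (\<Sum>i\<in>Basis. real (k i) *\<^sub>R i)) (h / N)" for k
  have "finite I"
    by (simp add: I_def finite_PiE)
  have "g x * indicator (cube a h) x \<le> (\<Sum>k\<in>I. g x * indicator (Q k) x)" for x
  proof (cases "x \<in> cube a h")
    case True
    then obtain k where "k \<in> I" "x \<in> Q k"
      using cube_grid_cover[OF N h] unfolding I_def Q_def by metis
    then have "g x * indicator (cube a h) x = g x * indicator (Q k) x"
      using True by simp
    also have "\<dots> \<le> (\<Sum>k\<in>I. g x * indicator (Q k) x)"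
      by (rule member_le_sum) (use \<open>k \<in> I\<close> \<open>finite I\<close> in auto)
    finally show ?thesis .
  qed simp
  then have "(\<integral>\<^sup>+x\<in>cube a h. g x \<partial>lebesgue) \<le> (\<integral>\<^sup>+x. (\<Sum>k\<in>I. g x * indicator (Q k) x) \<partial>lebesgue)"
    by (rule nn_integral_mono)
  also have "\<dots> = (\<Sum>k\<in>I. \<integral>\<^sup>+x\<in>Q k. g x \<partial>lebesgue)"
    by (rule nn_integral_sum) (auto simp: Q_def)
  finally show ?thesis
    unfolding I_def Q_def .
qed

lemma nn_integral_cube_eq_0_if_small:
  fixes g :: "'a::euclidean_space \<Rightarrow> ennreal"
  assumes g [measurable]: "g \<in> borel_measurable lebesgue" and "0 < \<beta>" "0 < h"
    and small: "\<And>a h. 0 < h \<Longrightarrow>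
      (\<integral>\<^sup>+x\<in>cube a h. g x \<partial>lebesgue) \<le> ennreal (c * h powr \<beta> * h ^ DIM('a))"
  shows "(\<integral>\<^sup>+x\<in>cube a h. g x \<partial>lebesgue) = 0"
proof -
  have grid_bound: "(\<integral>\<^sup>+x\<in>cube a h. g x \<partial>lebesgue) \<le> ennreal (c * (h / N) powr \<beta> * h ^ DIM('a))"
    if N: "1 \<le> N" for N :: nat
  proof -
    define t where "t = h / N"
    have t: "0 < t" "real N * t = h"
      using N \<open>0 < h\<close> by (auto simp: t_def)
    have "(\<integral>\<^sup>+x\<in>cube a h. g x \<partial>lebesgue)
        \<le> (\<Sum>k\<in>(Basis::'a set) \<rightarrow>\<^sub>E {..<N}. ennreal (c * t powr \<beta> * t ^ DIM('a)))"
      using nn_integral_cube_le_sum_subcubes[OF g N \<open>0 < h\<close>] small[OF t(1)]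
      unfolding t_def by (blast intro: order_trans sum_mono)
    also have "\<dots> = ennreal (real (N ^ DIM('a)) * (c * t powr \<beta> * t ^ DIM('a)))"
      by (simp add: card_PiE ennreal_mult' ennreal_of_nat_eq_real_of_nat)
    also have "real (N ^ DIM('a)) * (c * t powr \<beta> * t ^ DIM('a)) = c * t powr \<beta> * h ^ DIM('a)"
      by (simp flip: t(2) add: power_mult_distrib)
    finally show ?thesis
      by (simp add: t_def)
  qed
  have "(\<lambda>N. ennreal (c * (h / real N) powr \<beta> * h ^ DIM('a))) \<longlonglongrightarrow> ennreal (c * 0 * h ^ DIM('a))"
    using \<open>0 < \<beta>\<close> \<open>0 < h\<close>
    by (intro tendsto_ennrealI tendsto_mult tendsto_const tendsto_zero_powrI lim_const_over_n) auto
  then have "(\<lambda>N. ennreal (c * (h / real N) powr \<beta> * h ^ DIM('a))) \<longlonglongrightarrow> 0"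
    by simp
  then have "(\<integral>\<^sup>+x\<in>cube a h. g x \<partial>lebesgue) \<le> 0"
    by (rule tendsto_lowerbound) (use grid_bound in \<open>auto simp: eventually_sequentially\<close>)
  then show ?thesis
    by simp
qed

lemma AE_eq_0_if_cube_integrals_small:
  fixes g :: "'a::euclidean_space \<Rightarrow> ennreal"
  assumes g [measurable]: "g \<in> borel_measurable lebesgue" and "0 < \<beta>"
    and small: "\<And>a h. 0 < h \<Longrightarrow>
      (\<integral>\<^sup>+x\<in>cube a h. g x \<partial>lebesgue) \<le> ennreal (c * h powr \<beta> * h ^ DIM('a))"
  shows "AE x in lebesgue. g x = 0"
proof -
  define C :: "nat \<Rightarrow> 'a set" where "C m = cube (- real (Suc m) *\<^sub>R One) (2 * real (Suc m))" for m
  have "AE x in lebesgue. x \<in> C m \<longrightarrow> g x = 0" for m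
  proof -
    have "(\<integral>\<^sup>+x\<in>C m. g x \<partial>lebesgue) = 0"
      unfolding C_def by (rule nn_integral_cube_eq_0_if_small[OF g \<open>0 < \<beta>\<close> _ small]) auto
    then have "AE x in lebesgue. g x * indicator (C m) x = 0"
      by (subst (asm) nn_integral_0_iff_AE) (auto simp: C_def)
    then show ?thesis
      by (rule eventually_mono) (auto simp: indicator_def)
  qed
  then have "AE x in lebesgue. \<forall>m. x \<in> C m \<longrightarrow> g x = 0"
    by (subst AE_all_countable) blast
  moreover have "\<exists>m. x \<in> C m" for x
    using UN_centered_cubes unfolding C_def by blast
  ultimately show ?thesis
    by (auto elim!: eventually_mono)
qed

locale campanato =
  fixes b :: "'a::euclidean_space \<Rightarrow> real" and K \<beta> :: real
  assumes b_locally_integrable: "locally_integrable b" and \<beta>_pos: "0 < \<beta>"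
    and mean_oscillation: "\<And>a h. 0 < h \<Longrightarrow>
      (LINT x:cube a h|lebesgue. \<bar>b x - set_average lebesgue (cube a h) b\<bar>) \<le> K * h powr \<beta> * h ^ DIM('a)"
begin

abbreviation avg :: "'a \<Rightarrow> real \<Rightarrow> real" where
  "avg a h \<equiv> set_average lebesgue (cube a h) b"

lemma K_nonneg: "0 \<le> K"
proof -
  have "0 \<le> (LINT x:cube 0 1|lebesgue. \<bar>b x - avg 0 1\<bar>)"
    unfolding set_lebesgue_integral_def by (rule Bochner_Integration.integral_nonneg) simp
  also have "\<dots> \<le> K"
    using mean_oscillation[of 1 0] by simp
  finally show ?thesis .
qed

lemma avg_nested_le:
  assumes "0 < h\<^sub>1" "0 < h\<^sub>2" "cube a\<^sub>1 h\<^sub>1 \<subseteq> cube a\<^sub>2 h\<^sub>2"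
  shows "\<bar>avg a\<^sub>1 h\<^sub>1 - avg a\<^sub>2 h\<^sub>2\<bar> \<le> (h\<^sub>2 / h\<^sub>1) ^ DIM('a) * K * h\<^sub>2 powr \<beta>"
proof -
  have "\<bar>avg a\<^sub>1 h\<^sub>1 - avg a\<^sub>2 h\<^sub>2\<bar> \<le> (LINT x:cube a\<^sub>2 h\<^sub>2|lebesgue. \<bar>b x - avg a\<^sub>2 h\<^sub>2\<bar>) / h\<^sub>1 ^ DIM('a)"
    using abs_set_average_diff_le[OF sets_cube emeasure_cube_finite
        set_integrable_cube[OF b_locally_integrable] sets_cube assms(3)] assms(1)
    by (simp add: measure_cube)
  also have "\<dots> \<le> K * h\<^sub>2 powr \<beta> * h\<^sub>2 ^ DIM('a) / h\<^sub>1 ^ DIM('a)"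
    using assms(1) by (intro divide_right_mono mean_oscillation assms(2)) simp
  finally show ?thesis
    by (simp add: power_divide mult_ac)
qed

lemma half_powr_less_1: "(1 / 2) powr \<beta> < 1"
  using powr_less_mono2[OF \<beta>_pos, of "1 / 2" 1] by simp

definition C1 :: real where
  "C1 = 2 ^ DIM('a) * K * (1 / (1 - (1 / 2) powr \<beta>) + 1)"

lemma avg_halving_le:
  assumes "0 < s"
  shows "\<bar>avg x s - avg x (s / 2 ^ j)\<bar> \<le> 2 ^ DIM('a) * K / (1 - (1 / 2) powr \<beta>) * s powr \<beta>"
proof -
  define r where "r = (1 / 2 :: real) powr \<beta>"
  have r: "0 < r" "r < 1"
    using half_powr_less_1 by (auto simp: r_def)
  have step: "\<bar>avg x (s / 2 ^ i) - avg x (s / 2 ^ Suc i)\<bar> \<le> 2 ^ DIM('a) * K * s powr \<beta> * r ^ i" for i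
  proof -
    have "cube x (s / 2 ^ Suc i) \<subseteq> cube x (s / 2 ^ i)"
      using assms by (intro cube_subset_cube) (simp add: field_simps)
    then have "\<bar>avg x (s / 2 ^ Suc i) - avg x (s / 2 ^ i)\<bar> \<le> 2 ^ DIM('a) * K * (s / 2 ^ i) powr \<beta>"
      using avg_nested_le[of "s / 2 ^ Suc i" "s / 2 ^ i"] assms by simp
    then show ?thesis
      using assms by (simp add: divide_power_powr abs_minus_commute r_def)
  qed
  have "\<bar>avg x s - avg x (s / 2 ^ j)\<bar> \<le> 2 ^ DIM('a) * K * s powr \<beta> * (\<Sum>i<j. r ^ i)"
  proof (induction j)
    case (Suc j)
    then show ?case
      using step[of j] by (simp add: algebra_simps)
  qed simp
  also have "\<dots> \<le> 2 ^ DIM('a) * K * s powr \<beta> * (1 / (1 - r))"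
    using r K_nonneg by (intro mult_left_mono) (simp_all add: sum_gp_strict divide_right_mono)
  finally show ?thesis
    by (simp add: r_def)
qed

lemma avg_same_corner_le:
  assumes "0 < t" "t \<le> s"
  shows "\<bar>avg x s - avg x t\<bar> \<le> C1 * s powr \<beta>"
proof -
  obtain j where j: "s / 2 ^ Suc j < t" "t \<le> s / 2 ^ j"
    using dyadic_bracket[OF assms] .
  have "cube x t \<subseteq> cube x (s / 2 ^ j)"
    using j by (intro cube_subset_cube) auto
  then have "\<bar>avg x t - avg x (s / 2 ^ j)\<bar> \<le> (s / 2 ^ j / t) ^ DIM('a) * K * (s / 2 ^ j) powr \<beta>"
    using assms by (intro avg_nested_le) auto
  also have "\<dots> \<le> 2 ^ DIM('a) * K * s powr \<beta>"
  proof (intro mult_mono power_mono)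
    show "s / 2 ^ j / t \<le> 2"
      using j assms by (simp add: field_simps)
    show "(s / 2 ^ j) powr \<beta> \<le> s powr \<beta>"
      using assms \<beta>_pos by (intro powr_mono2) (auto simp: field_simps)
  qed (use assms K_nonneg in auto)
  finally show ?thesis
    using avg_halving_le[of s x j] assms by (simp add: C1_def algebra_simps)
qed

definition holder_rep :: "'a \<Rightarrow> real" where
  "holder_rep x = lim (\<lambda>k. avg x (1 / 2 ^ k))"

lemma avg_tendsto_holder_rep: "(\<lambda>k. avg x (1 / 2 ^ k)) \<longlonglongrightarrow> holder_rep x"
proof -
  have "(\<lambda>k. C1 * (1 / 2 ^ k) powr \<beta>) \<longlonglongrightarrow> 0"
    using tendsto_zero_powrI[OF LIMSEQ_divide_realpow_zero[of 2 1] tendsto_const] \<beta>_pos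
    by (auto intro: tendsto_mult_right_zero)
  moreover have "\<bar>avg x (1 / 2 ^ m) - avg x (1 / 2 ^ n)\<bar> \<le> C1 * (1 / 2 ^ m) powr \<beta>" if "m \<le> n" for m n
    using that by (intro avg_same_corner_le) (auto simp: field_simps)
  ultimately have "Cauchy (\<lambda>k. avg x (1 / 2 ^ k))"
    by (intro Cauchy_if_dist_le_null) (auto simp: dist_real_def)
  then show ?thesis
    unfolding holder_rep_def by (simp add: Cauchy_convergent_iff convergent_LIMSEQ_iff)
qed

lemma avg_holder_rep_le:
  assumes "0 < s"
  shows "\<bar>avg x s - holder_rep x\<bar> \<le> C1 * s powr \<beta>"
proof (rule tendsto_upperbound)
  show "(\<lambda>k. \<bar>avg x s - avg x (1 / 2 ^ k)\<bar>) \<longlonglongrightarrow> \<bar>avg x s - holder_rep x\<bar>"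
    by (intro tendsto_intros avg_tendsto_holder_rep)
  have "\<forall>\<^sub>F k in sequentially. 1 / 2 ^ k < s"
    using order_tendstoD(2)[OF LIMSEQ_divide_realpow_zero[of 2 1] assms] by simp
  then show "\<forall>\<^sub>F k in sequentially. \<bar>avg x s - avg x (1 / 2 ^ k)\<bar> \<le> C1 * s powr \<beta>"
    by eventually_elim (simp add: avg_same_corner_le)
qed simp

definition C2 :: real where
  "C2 = C1 + 2 * 2 ^ DIM('a) * K * 2 powr \<beta>"

lemma C2_nonneg: "0 \<le> C2"
  using half_powr_less_1 K_nonneg by (simp add: C2_def C1_def)

lemma holder_rep_avg_le:
  assumes h: "0 < h" and x: "x \<in> cube a h"
  shows "\<bar>holder_rep x - avg a h\<bar> \<le> C2 * h powr \<beta>"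
proof -
  have nested: "\<bar>avg c h - avg a (2 * h)\<bar> \<le> 2 ^ DIM('a) * K * 2 powr \<beta> * h powr \<beta>"
    if "cube c h \<subseteq> cube a (2 * h)" for c
    using avg_nested_le[OF h _ that] h by (simp add: powr_mult)
  have "cube x h \<subseteq> cube a (2 * h)" "cube a h \<subseteq> cube a (2 * h)"
    using x h by (auto intro!: cube_subset_cube simp: mem_cube)
  then have "\<bar>avg x h - avg a h\<bar> \<le> 2 * 2 ^ DIM('a) * K * 2 powr \<beta> * h powr \<beta>"
    using nested[of x] nested[of a] by linarith
  then show ?thesis
    using avg_holder_rep_le[OF h, of x] unfolding C2_def by (simp add: algebra_simps)
qed

lemma holder_rep_holder: "\<bar>holder_rep x - holder_rep y\<bar> \<le> 2 * C2 * norm (x - y) powr \<beta>"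
proof (cases "x = y")
  case False
  define h where "h = norm (x - y)"
  define a :: 'a where "a = (\<Sum>i\<in>Basis. min (x \<bullet> i) (y \<bullet> i) *\<^sub>R i)"
  have "a \<bullet> i \<le> x \<bullet> i \<and> x \<bullet> i \<le> a \<bullet> i + h \<and> a \<bullet> i \<le> y \<bullet> i \<and> y \<bullet> i \<le> a \<bullet> i + h"
    if "i \<in> Basis" for i
    using Basis_le_norm[OF that, of "x - y"] that by (auto simp: a_def h_def inner_diff_left min_def)
  then have "x \<in> cube a h" "y \<in> cube a h"
    by (auto simp: mem_cube)
  then show ?thesis
    using holder_rep_avg_le[of h x a] holder_rep_avg_le[of h y a] False by (simp add: h_def)
qed simp

lemma holder_rep_in_lip_space: "holder_rep \<in> lip_space \<beta>"
  unfolding lip_space_def using holder_rep_holder by blast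

lemma holder_rep_measurable: "holder_rep \<in> borel_measurable lebesgue"
proof -
  have "continuous_on UNIV holder_rep"
    using holder_rep_holder by (intro holder_imp_continuous_on[OF \<beta>_pos]) (simp add: dist_real_def dist_norm)
  then have "holder_rep \<in> borel_measurable lborel"
    by (simp add: borel_measurable_continuous_onI)
  then show ?thesis
    by (rule measurable_completion)
qed

lemma nn_integral_cube_diff_holder_rep_le:
  assumes h: "0 < h"
  shows "(\<integral>\<^sup>+x\<in>cube a h. ennreal \<bar>b x - holder_rep x\<bar> \<partial>lebesgue)
    \<le> ennreal ((K + C2) * h powr \<beta> * h ^ DIM('a))"
proof -
  define c where "c = C2 * h powr \<beta>"
  have "c \<ge> 0"
    using C2_nonneg by (simp add: c_def)
  have osc_plus_c: "set_integrable lebesgue (cube a h) (\<lambda>x. \<bar>b x - avg a h\<bar> + c)"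
    using set_integrable_cube[OF b_locally_integrable] set_integrable_const[OF sets_cube emeasure_cube_finite]
    by (intro set_integral_add(1) set_integrable_abs set_integral_diff(1))
  have "\<bar>b x - holder_rep x\<bar> \<le> \<bar>b x - avg a h\<bar> + c" if "x \<in> cube a h" for x
    using holder_rep_avg_le[OF h that] by (simp add: c_def)
  then have "(\<integral>\<^sup>+x\<in>cube a h. ennreal \<bar>b x - holder_rep x\<bar> \<partial>lebesgue)
      \<le> (\<integral>\<^sup>+x\<in>cube a h. ennreal (\<bar>b x - avg a h\<bar> + c) \<partial>lebesgue)"
    by (intro nn_integral_mono) (simp add: indicator_def ennreal_leI)
  also have "\<dots> = ennreal (LINT x:cube a h|lebesgue. \<bar>b x - avg a h\<bar> + c)"
    using \<open>c \<ge> 0\<close> by (intro set_nn_integral_eq_set_integral[OF osc_plus_c]) simp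
  also have "\<dots> \<le> ennreal ((K + C2) * h powr \<beta> * h ^ DIM('a))"
  proof (rule ennreal_leI)
    have "(LINT x:cube a h|lebesgue. \<bar>b x - avg a h\<bar> + c)
        = (LINT x:cube a h|lebesgue. \<bar>b x - avg a h\<bar>) + c * h ^ DIM('a)"
      using set_integral_diff_const[OF sets_cube emeasure_cube_finite osc_plus_c, of c] h
      by (simp add: measure_cube)
    then show "(LINT x:cube a h|lebesgue. \<bar>b x - avg a h\<bar> + c) \<le> (K + C2) * h powr \<beta> * h ^ DIM('a)"
      using mean_oscillation[OF h] by (simp add: c_def algebra_simps)
  qed
  finally show ?thesis .
qed

lemma AE_eq_holder_rep: "AE x in lebesgue. b x = holder_rep x"
proof -
  have "AE x in lebesgue. ennreal \<bar>b x - holder_rep x\<bar> = 0"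
    using locally_integrable_imp_measurable[OF b_locally_integrable] holder_rep_measurable
    by (intro AE_eq_0_if_cube_integrals_small[OF _ \<beta>_pos nn_integral_cube_diff_holder_rep_le]) auto
  then show ?thesis
    by (rule eventually_mono) simp
qed

end

theorem campanato_imp_lip_space:
  fixes b :: "'a::euclidean_space \<Rightarrow> real"
  assumes "locally_integrable b" "0 < \<beta>"
    and "\<And>a h. 0 < h \<Longrightarrow>
      (LINT x:cube a h|lebesgue. \<bar>b x - set_average lebesgue (cube a h) b\<bar>) \<le> K * h powr \<beta> * h ^ DIM('a)"
  shows "\<exists>b'. (AE x in lebesgue. b x = b' x) \<and> b' \<in> lip_space \<beta>"
proof -
  interpret campanato b K \<beta>
    using assms by unfold_locales
  show ?thesis
    using AE_eq_holder_rep holder_rep_in_lip_space by blast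
qed

section \<open>Luxemburg norms and maximal functions\<close>

lemma divide_le_ennreal: "b \<noteq> 0 \<Longrightarrow> b < top \<Longrightarrow> a / b \<le> c \<longleftrightarrow> a \<le> (c * b :: ennreal)"
  by (cases a; cases b; cases c)
     (auto simp: divide_ennreal ennreal_mult[symmetric] field_simps ennreal_top_mult ennreal_top_divide
        top_unique)

lemma epowr_mono: "0 \<le> q \<Longrightarrow> x \<le> y \<Longrightarrow> epowr x q \<le> epowr y q"
  by (cases "y = \<infinity>")
    (auto simp: epowr_def top_unique enn2real_mono less_top intro!: ennreal_leI powr_mono2)

lemma vmod_mono: "(\<And>x. F x \<le> G x) \<Longrightarrow> (\<And>x. 0 \<le> p x) \<Longrightarrow> vmod p F r \<le> vmod p G r"
  unfolding vmod_def by (intro nn_integral_mono epowr_mono divide_right_mono_ennreal)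

lemma vnorm_mono: "(\<And>x. F x \<le> G x) \<Longrightarrow> (\<And>x. 0 \<le> p x) \<Longrightarrow> vnorm p F \<le> vnorm p G"
  unfolding vnorm_def by (intro Inf_superset_mono) (blast intro: vmod_mono order_trans)

lemma vnorm_finite_imp_vmod_le_1:
  assumes "vnorm p F < \<infinity>"
  shows "\<exists>r>0. vmod p F r \<le> 1"
proof (rule ccontr)
  assume "\<not> ?thesis"
  then have "{ennreal r | r. 0 < r \<and> vmod p F r \<le> 1} = {}"
    by blast
  then have "vnorm p F = top"
    unfolding vnorm_def by (simp only: Inf_empty)
  with assms show False
    by simp
qed

lemma in_Lp_if_vnorm_finite:
  assumes "f \<in> borel_measurable lebesgue" "vnorm p (\<lambda>x. ennreal \<bar>f x\<bar>) < \<infinity>"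
  shows "in_Lp p f"
proof -
  obtain r where r: "0 < r" "vmod p (\<lambda>x. ennreal \<bar>f x\<bar>) r \<le> 1"
    using vnorm_finite_imp_vmod_le_1[OF assms(2)] by blast
  then have "vmod p (\<lambda>x. ennreal \<bar>f x\<bar>) r < \<infinity>"
    using order.strict_trans1[OF r(2) ennreal_one_less_top] by simp
  then show ?thesis
    using assms(1) r(1) unfolding in_Lp_def by blast
qed

lemma vnorm_cmult_le:
  assumes "0 \<le> c"
  shows "ennreal c * vnorm p F \<le> vnorm p (\<lambda>x. ennreal c * F x)"
proof (cases "c = 0")
  case False
  with assms have c: "0 < c"
    by simp
  show ?thesis
    unfolding vnorm_def[of p "\<lambda>x. ennreal c * F x"]
  proof (rule Inf_greatest, safe)
    fix r :: real
    assume r: "0 < r" "vmod p (\<lambda>x. ennreal c * F x) r \<le> 1"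
    have "z / ennreal (r / c) = ennreal c * z / ennreal r" for z
      using c r(1) by (simp add: divide_ennreal_def inverse_ennreal ennreal_mult[symmetric] mult_ac divide_inverse)
    then have "vmod p F (r / c) = vmod p (\<lambda>x. ennreal c * F x) r"
      unfolding vmod_def by simp
    then have "vnorm p F \<le> ennreal (r / c)"
      unfolding vnorm_def using r c by (intro Inf_lower) auto
    then have "ennreal c * vnorm p F \<le> ennreal c * ennreal (r / c)"
      by (rule mult_left_mono) simp
    also have "\<dots> = ennreal r"
      using c r(1) by (simp flip: ennreal_mult)
    finally show "ennreal c * vnorm p F \<le> ennreal r" .
  qed
qed simp

lemma vmod_indicator:
  assumes "0 < r"
  shows "vmod p (indicator Q) r = (\<integral>\<^sup>+x. ennreal ((1 / r) powr p x) * indicator Q x \<partial>lebesgue)"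
proof -
  have "epowr (indicator Q x / ennreal r) (p x) = ennreal ((1 / r) powr p x) * indicator Q x" for x
    using assms divide_ennreal[of 1 r] by (cases "x \<in> Q") (simp_all add: epowr_def)
  then show ?thesis
    unfolding vmod_def by simp
qed

context
  fixes p :: "'a::euclidean_space \<Rightarrow> real" and Q :: "'a set" and \<mu> :: real
  assumes p: "\<And>x. 1 \<le> p x" and Q: "Q \<in> sets lebesgue" "emeasure lebesgue Q = ennreal \<mu>" "0 < \<mu>"
begin

lemma vnorm_indicator_le: "vnorm p (indicator Q) \<le> ennreal (max 1 \<mu>)"
proof -
  define L where "L = max 1 \<mu>"
  have L: "0 < L" "1 \<le> L" "\<mu> \<le> L"
    by (auto simp: L_def)
  have "vmod p (indicator Q) L \<le> (\<integral>\<^sup>+x. ennreal (1 / L) * indicator Q x \<partial>lebesgue)"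
    unfolding vmod_indicator[OF L(1)]
  proof (intro nn_integral_mono mult_right_mono ennreal_leI)
    show "(1 / L) powr p x \<le> 1 / L" for x
      using powr_mono'[of 1 "p x" "1 / L"] p[of x] L by simp
  qed simp
  also have "\<dots> = ennreal (\<mu> / L)"
    using Q L by (simp add: nn_integral_cmult_indicator flip: ennreal_mult)
  also have "\<dots> \<le> 1"
    using L Q by simp
  finally show ?thesis
    unfolding vnorm_def L_def[symmetric] using L by (intro Inf_lower) auto
qed

lemma vnorm_indicator_ge: "ennreal (min 1 \<mu>) \<le> vnorm p (indicator Q)"
  unfolding vnorm_def
proof (rule Inf_greatest, safe, rule ccontr)
  fix r :: real
  assume r: "0 < r" "vmod p (indicator Q) r \<le> 1" and "\<not> ennreal (min 1 \<mu>) \<le> ennreal r"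
  then have "r < min 1 \<mu>"
    by (meson ennreal_leI not_le)
  have "(\<integral>\<^sup>+x. ennreal (1 / r) * indicator Q x \<partial>lebesgue) \<le> vmod p (indicator Q) r"
    unfolding vmod_indicator[OF r(1)]
  proof (intro nn_integral_mono mult_right_mono ennreal_leI)
    show "1 / r \<le> (1 / r) powr p x" for x
      using powr_mono[of 1 "p x" "1 / r"] p[of x] \<open>r < min 1 \<mu>\<close> r(1) by (simp add: field_simps)
  qed simp
  also have "\<dots> \<le> 1"
    by (rule r(2))
  finally have "ennreal (\<mu> / r) \<le> 1"
    using Q r(1) by (simp add: nn_integral_cmult_indicator flip: ennreal_mult)
  then show False
    using \<open>r < min 1 \<mu>\<close> r(1) by (simp add: field_simps)
qed

lemma vnorm_indicator_eq_ennreal: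
  obtains v where "vnorm p (indicator Q) = ennreal v" "0 < v"
  using vnorm_indicator_le vnorm_indicator_ge Q(3)
  by (cases "vnorm p (indicator Q)") (auto simp: top_unique)

end

lemma frac_max_ge_average:
  "is_cube Q \<Longrightarrow> x \<in> Q \<Longrightarrow>
    ereal (measure lebesgue Q powr (\<gamma> / real DIM('a) - 1) * (LINT y:Q|lebesgue. \<bar>f y\<bar>))
      \<le> frac_max \<gamma> Q f (x::'a::euclidean_space)"
  unfolding frac_max_def by (intro SUP_upper) auto

lemma HL_max_ge_average:
  "is_cube Q \<Longrightarrow> x \<in> Q \<Longrightarrow> (\<integral>\<^sup>+y\<in>Q. ennreal \<bar>f y\<bar> \<partial>lebesgue) / emeasure lebesgue Q \<le> HL_max f x"
  unfolding HL_max_def by (intro SUP_upper) auto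

lemma pos_part_le_osc_fun:
  fixes b :: "'a::euclidean_space \<Rightarrow> real"
  assumes Q: "is_cube Q" and b: "set_integrable lebesgue Q b"
  shows "ennreal (max 0 (set_average lebesgue Q b - b x) * indicator Q x) \<le> osc_fun \<gamma> b Q x"
proof (cases "x \<in> Q")
  case True
  define \<mu> where "\<mu> = measure lebesgue Q"
  define n where "n = real DIM('a)"
  define I where "I = (LINT y:Q|lebesgue. \<bar>b y\<bar>)"
  define w where "w = \<mu> powr (- \<gamma> / n)"
  define F where "F = frac_max \<gamma> Q b x"
  have "0 < \<mu>" "0 < w"
    using measure_pos_if_is_cube[OF Q] by (simp_all add: \<mu>_def w_def)
  have F: "ereal (\<mu> powr (\<gamma> / n - 1) * I) \<le> F"
    unfolding \<mu>_def n_def I_def F_def using frac_max_ge_average[OF Q True] .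
  have "w * \<mu> powr (\<gamma> / n - 1) = \<mu> powr (- 1)"
    unfolding w_def by (simp flip: powr_add)
  then have scaled_F: "w * (\<mu> powr (\<gamma> / n - 1) * I) = I / \<mu>"
    using \<open>0 < \<mu>\<close> by (simp add: powr_minus_divide mult.assoc[symmetric])
  have "(LINT y:Q|lebesgue. b y) \<le> I"
    unfolding I_def by (intro set_integral_mono b set_integrable_abs) simp
  then have avg_le: "set_average lebesgue Q b \<le> I / \<mu>"
    using \<open>0 < \<mu>\<close> by (simp add: set_average_def \<mu>_def divide_right_mono)
  have osc: "osc_fun \<gamma> b Q x = e2ennreal \<bar>ereal (b x) - ereal w * F\<bar>"
    using True by (simp add: osc_fun_def w_def F_def \<mu>_def n_def)
  show ?thesis
  proof (cases F)
    case (real r)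
    have "I / \<mu> \<le> w * r"
      using F real \<open>0 < w\<close> scaled_F by (metis ereal_less_eq(3) mult_left_mono less_imp_le)
    then have "max 0 (set_average lebesgue Q b - b x) \<le> \<bar>b x - w * r\<bar>"
      using avg_le by linarith
    then show ?thesis
      unfolding osc using True real by (simp add: ennreal_leI)
  next
    case PInf
    then show ?thesis
      unfolding osc using \<open>0 < w\<close> by simp
  next
    case MInf
    then show ?thesis
      using F by simp
  qed
qed (simp add: osc_fun_def)

context
  fixes s :: "'a::euclidean_space \<Rightarrow> real" and C\<^sub>M :: real
  assumes s_ge_1: "\<And>x. 1 \<le> s x"
    and maximal: "\<And>f. in_Lp s f \<Longrightarrow> vnorm s (HL_max f) \<le> ennreal C\<^sub>M * vnorm s (\<lambda>x. ennreal \<bar>f x\<bar>)"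
begin

lemma integral_le_if_vnorm_le_indicator:
  fixes f :: "'a \<Rightarrow> real"
  assumes Q: "is_cube Q" and f: "integrable lebesgue f" "\<And>x. 0 \<le> f x" "\<And>x. x \<notin> Q \<Longrightarrow> f x = 0"
    and f_norm: "vnorm s (\<lambda>x. ennreal \<bar>f x\<bar>) \<le> ennreal A * vnorm s (indicator Q)"
  shows "integral\<^sup>L lebesgue f \<le> max 0 C\<^sub>M * max 0 A * measure lebesgue Q"
proof -
  define \<mu> where "\<mu> = measure lebesgue Q"
  have \<mu>: "0 < \<mu>" "emeasure lebesgue Q = ennreal \<mu>"
    using measure_pos_if_is_cube[OF Q] emeasure_eq_measure_if_is_cube[OF Q] by (simp_all add: \<mu>_def)
  obtain v where V: "vnorm s (indicator Q) = ennreal v" "0 < v"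
    using vnorm_indicator_eq_ennreal[where p = s] s_ge_1 sets_if_is_cube[OF Q] \<mu> by blast
  define c where "c = integral\<^sup>L lebesgue f / \<mu>"
  have "0 \<le> c"
    using \<mu>(1) f(2) by (simp add: c_def)
  have "(\<integral>\<^sup>+y\<in>Q. ennreal \<bar>f y\<bar> \<partial>lebesgue) = ennreal (integral\<^sup>L lebesgue f)"
    using f by (subst nn_integral_eq_integral[symmetric]) (auto intro!: nn_integral_cong simp: indicator_def)
  then have c_le_HL_max: "ennreal c * indicator Q x \<le> HL_max f x" for x
    using HL_max_ge_average[OF Q, of x f] \<mu> f(2)
    by (cases "x \<in> Q") (simp_all add: c_def divide_ennreal)
  have "ennreal c * vnorm s (indicator Q) \<le> vnorm s (\<lambda>x. ennreal c * indicator Q x)"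
    by (rule vnorm_cmult_le[OF \<open>0 \<le> c\<close>])
  also have "\<dots> \<le> vnorm s (HL_max f)"
    using c_le_HL_max s_ge_1 by (intro vnorm_mono) (auto intro: order_trans[OF zero_le_one])
  also have "\<dots> \<le> ennreal C\<^sub>M * vnorm s (\<lambda>x. ennreal \<bar>f x\<bar>)"
  proof (rule maximal, rule in_Lp_if_vnorm_finite)
    show "f \<in> borel_measurable lebesgue"
      using f(1) by (rule borel_measurable_integrable)
    show "vnorm s (\<lambda>x. ennreal \<bar>f x\<bar>) < \<infinity>"
      using f_norm V(1) by (simp add: le_less_trans ennreal_mult_less_top flip: ennreal_mult'')
  qed
  also have "\<dots> \<le> ennreal C\<^sub>M * (ennreal A * vnorm s (indicator Q))"
    by (intro mult_left_mono f_norm) simp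
  finally have "ennreal (c * v) \<le> ennreal (max 0 C\<^sub>M * max 0 A * v)"
    using V \<open>0 \<le> c\<close> by (simp add: ennreal_max_0 ennreal_mult mult.assoc)
  then have "c \<le> max 0 C\<^sub>M * max 0 A"
    using V(2) by (simp add: ennreal_le_iff)
  then show ?thesis
    using \<mu>(1) by (simp add: c_def \<mu>_def divide_le_eq)
qed

lemma cube_mean_oscillation_le:
  fixes b :: "'a \<Rightarrow> real"
  assumes b: "locally_integrable b" and Q: "is_cube Q"
    and osc: "vnorm s (osc_fun \<gamma> b Q) \<le> ennreal A * vnorm s (indicator Q)"
  shows "(LINT x:Q|lebesgue. \<bar>b x - set_average lebesgue Q b\<bar>) \<le> 2 * max 0 C\<^sub>M * max 0 A * measure lebesgue Q"
proof -
  define m where "m = set_average lebesgue Q b"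
  define f where "f = (\<lambda>x. max 0 (m - b x) * indicator Q x)"
  have Q_fin: "Q \<in> sets lebesgue" "emeasure lebesgue Q < \<infinity>"
    using sets_if_is_cube[OF Q] emeasure_eq_measure_if_is_cube[OF Q] by simp_all
  have b_Q: "set_integrable lebesgue Q b"
    by (rule set_integrable_if_is_cube[OF Q b])
  have "set_integrable lebesgue Q (\<lambda>x. max 0 (m - b x))"
    using set_integrable_max_0[OF set_integral_diff(1)[OF set_integrable_const[OF Q_fin] b_Q]] .
  then have "integrable lebesgue f"
    unfolding set_integrable_def f_def by (simp add: mult.commute)
  moreover have "vnorm s (\<lambda>x. ennreal \<bar>f x\<bar>) \<le> ennreal A * vnorm s (indicator Q)"
    using pos_part_le_osc_fun[OF Q b_Q] s_ge_1
    by (intro order_trans[OF vnorm_mono osc]) (auto simp: f_def m_def intro: order_trans[OF zero_le_one])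
  ultimately have "integral\<^sup>L lebesgue f \<le> max 0 C\<^sub>M * max 0 A * measure lebesgue Q"
    using Q by (intro integral_le_if_vnorm_le_indicator) (auto simp: f_def)
  moreover have "(LINT x:Q|lebesgue. \<bar>b x - m\<bar>) = 2 * integral\<^sup>L lebesgue f"
    using set_integral_abs_diff_set_average[OF Q_fin b_Q] measure_pos_if_is_cube[OF Q]
    by (simp add: m_def f_def set_lebesgue_integral_def mult.commute)
  ultimately show ?thesis
    by (simp add: m_def)
qed

lemma cube_mean_oscillation_le_if_quotient_le:
  fixes b :: "'a \<Rightarrow> real"
  assumes b: "locally_integrable b" and Q: "is_cube Q"
    and quotient: "vnorm s (osc_fun \<gamma> b Q) /
      (ennreal (measure lebesgue Q powr (\<beta> / real DIM('a))) * vnorm s (indicator Q)) \<le> ennreal C"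
  shows "(LINT x:Q|lebesgue. \<bar>b x - set_average lebesgue Q b\<bar>)
    \<le> 2 * max 0 C\<^sub>M * max 0 C * measure lebesgue Q powr (\<beta> / real DIM('a)) * measure lebesgue Q"
proof -
  define d where "d = measure lebesgue Q powr (\<beta> / real DIM('a))"
  have "0 < d"
    using measure_pos_if_is_cube[OF Q] by (simp add: d_def)
  obtain v where V: "vnorm s (indicator Q) = ennreal v" "0 < v"
    using vnorm_indicator_eq_ennreal[where p = s] s_ge_1 sets_if_is_cube[OF Q]
      emeasure_eq_measure_if_is_cube[OF Q] measure_pos_if_is_cube[OF Q]
    by blast
  have "vnorm s (osc_fun \<gamma> b Q) \<le> ennreal C * (ennreal d * vnorm s (indicator Q))"
    using quotient \<open>0 < d\<close> V by (subst (asm) divide_le_ennreal) (auto simp flip: ennreal_mult d_def)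
  also have "\<dots> = ennreal (max 0 C * d) * vnorm s (indicator Q)"
    using \<open>0 < d\<close> by (simp add: ennreal_max_0 ennreal_mult mult.assoc)
  finally have "(LINT x:Q|lebesgue. \<bar>b x - set_average lebesgue Q b\<bar>)
      \<le> 2 * max 0 C\<^sub>M * max 0 (max 0 C * d) * measure lebesgue Q"
    by (rule cube_mean_oscillation_le[OF b Q])
  then show ?thesis
    using \<open>0 < d\<close> by (simp add: d_def mult.assoc)
qed

end

theorem lemma3p1:
  fixes b s :: "'a::euclidean_space \<Rightarrow> real" and \<beta> \<gamma> C :: real
  assumes "0 < \<beta>" "\<beta> < 1" "0 < \<gamma>" "\<gamma> < real DIM('a)"
    and "locally_integrable b"
    and "s \<in> class_B"
    and "(SUP Q\<in>{Q. is_cube Q}.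
           vnorm s (osc_fun \<gamma> b Q) /
           (ennreal (measure lebesgue Q powr (\<beta> / real DIM('a))) * vnorm s (indicator Q)))
         \<le> ennreal C"
  shows "\<exists>b'. (AE x in lebesgue. b x = b' x) \<and> b' \<in> lip_space \<beta>"
proof -
  obtain C\<^sub>M where s_ge_1: "\<And>x. 1 \<le> s x"
    and maximal: "\<And>f. in_Lp s f \<Longrightarrow> vnorm s (HL_max f) \<le> ennreal C\<^sub>M * vnorm s (\<lambda>x. ennreal \<bar>f x\<bar>)"
    using assms(6) unfolding class_B_def by blast
  have "(LINT x:cube a h|lebesgue. \<bar>b x - set_average lebesgue (cube a h) b\<bar>)
      \<le> (2 * max 0 C\<^sub>M * max 0 C) * h powr \<beta> * h ^ DIM('a)" if "0 < h" for a h
  proof -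
    have quotient: "vnorm s (osc_fun \<gamma> b (cube a h)) / (ennreal (measure lebesgue (cube a h)
        powr (\<beta> / real DIM('a))) * vnorm s (indicator (cube a h))) \<le> ennreal C"
      by (rule order_trans[OF SUP_upper assms(7)]) (simp add: is_cube_cube[OF that])
    have "(LINT x:cube a h|lebesgue. \<bar>b x - set_average lebesgue (cube a h) b\<bar>)
        \<le> 2 * max 0 C\<^sub>M * max 0 C * measure lebesgue (cube a h) powr (\<beta> / real DIM('a))
          * measure lebesgue (cube a h)"
      using s_ge_1 maximal assms(5) is_cube_cube[OF that] quotient
      by (rule cube_mean_oscillation_le_if_quotient_le)
    then show ?thesis
      unfolding measure_cube_powr[OF that] using that by (simp add: measure_cube)
  qed
  then show ?thesis
    by (rule campanato_imp_lip_space[OF assms(5) assms(1)])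
qed

end
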